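(* Let $\mathcal V$ be a finite alphabet, $\mathcal V^*$ the set of finite strings over $\mathcal V$, $e$ an environment, and $p(c,t)$ a joint distribution over implementations $c\in\mathcal V^*$ and test suites $t\in\mathcal V^*$ with marginals $p(c)$ and $p(t)$. Let $R(c,t\mid e):=\frac{1}{|t|}\sum_{k=1}^{|t|}O_k(c,t\mid e)\in[0,1]$. Define the functional equivalence classes $\mathcal N_c^\infty:=\{c'\in\mathcal V^*: O(c,t\mid e)=O(c',t\mid e)\text{ for all } t \text{ with } p(t)>0\}$ and $p(\mathcal N_c^\infty):=\sum_{c'\in\mathcal N_c^\infty}p(c')$. Assume: (i) (code-test calibration) $p(\mathcal N_c^\infty)=\mathbb P_{t\sim p}[R(c,t\mid e)=1]$ for every $c\in\mathcal V^*$; (ii) (well-specification) for $t\sim p$, almost surely there exists exactly one equivalence class $\mathcal N_c^\infty$ such that $R(c,t\mid e)=1$. For a set of $k$ distinct equivalence classes $\{\mathcal N_{c_i}^\infty\}_{i=1}^k$ define $\mathrm{Pass@k}(\{\mathcal N_{c_i}^\infty\}_{i=1}^k):=\mathbb P_{t\sim p}[\exists\, i\in\{1,\dots,k\}: R(c_i,t\mid e)=1]$. Then $\mathrm{Pass@k}$ is maximized (over all choices of $k$ distinct equivalence classes) by greedily selecting the $k$ classes $\mathcal N_c^\infty$ with the largest values of $p(\mathcal N_c^\infty)$.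
   Context: A test suite $t\in\mathcal V^*$ consists of $|t|\ge1$ test cases. For an environment $e$, an implementation $c$ and a test suite $t$, the test harness returns a deterministic output vector $O(c,t\mid e)=(O_1(c,t\mid e),\dots,O_{|t|}(c,t\mid e))\in\{0,1\}^{|t|}$, where $0$ indicates failure and $1$ success of the $k$-th test case. Codes in the same class $\mathcal N_c^\infty$ have the same value of $R(\cdot,t\mid e)$ for all $t$ with $p(t)>0$. *)

theory Defs
  imports "HOL-Probability.Probability"
begin

text \<open>For an environment e, the harness output Out e c t is a 0/1 vector of
length ntests t (number of test cases of t); Out e c t k is the k-th entry, k = 1..ntests t
(True = success).\<close>

definition reward ::
  "('e \<Rightarrow> 'v list \<Rightarrow> 'v list \<Rightarrow> nat \<Rightarrow> bool) \<Rightarrow> ('v list \<Rightarrow> nat) \<Rightarrow> 'e \<Rightarrow> 'v list \<Rightarrow> 'v list \<Rightarrow> real"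
  where "reward Out ntests e c t = (\<Sum>k = 1..ntests t. of_bool (Out e c t k)) / real (ntests t)"

definition code_marg :: "('a \<times> 'b) pmf \<Rightarrow> 'a pmf" where "code_marg p = map_pmf fst p"
definition test_marg :: "('a \<times> 'b) pmf \<Rightarrow> 'b pmf" where "test_marg p = map_pmf snd p"

definition equiv_class ::
  "('e \<Rightarrow> 'v list \<Rightarrow> 'v list \<Rightarrow> nat \<Rightarrow> bool) \<Rightarrow> ('v list \<Rightarrow> nat) \<Rightarrow> 'e \<Rightarrow> ('v list \<times> 'v list) pmf
    \<Rightarrow> 'v list \<Rightarrow> 'v list set"
  where "equiv_class Out ntests e p c =
    {c'. \<forall>t. pmf (test_marg p) t > 0 \<longrightarrow> (\<forall>k \<in> {1..ntests t}. Out e c t k = Out e c' t k)}"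

definition class_prob ::
  "('e \<Rightarrow> 'v list \<Rightarrow> 'v list \<Rightarrow> nat \<Rightarrow> bool) \<Rightarrow> ('v list \<Rightarrow> nat) \<Rightarrow> 'e \<Rightarrow> ('v list \<times> 'v list) pmf
    \<Rightarrow> 'v list \<Rightarrow> real"
  where "class_prob Out ntests e p c = measure_pmf.prob (code_marg p) (equiv_class Out ntests e p c)"

text \<open>Pass@k of the classes represented by the list cs = [c_1,...,c_k].\<close>
definition pass_at ::
  "('e \<Rightarrow> 'v list \<Rightarrow> 'v list \<Rightarrow> nat \<Rightarrow> bool) \<Rightarrow> ('v list \<Rightarrow> nat) \<Rightarrow> 'e \<Rightarrow> ('v list \<times> 'v list) pmf
    \<Rightarrow> 'v list list \<Rightarrow> real"
  where "pass_at Out ntests e p cs =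
    measure_pmf.prob (test_marg p) {t. \<exists>i < length cs. reward Out ntests e (cs ! i) t = 1}"

end

theory Submission
  imports Defs
begin

text \<open>By well-specification, almost surely a test suite is passed by the members of exactly
one equivalence class, so the pass events of pairwise distinct classes are disjoint on the
support of the test marginal. Pass@k of k distinct classes is therefore the sum of their pass
probabilities, which calibration identifies with the class probabilities. A sum of class
probabilities over k classes is largest for the greedy selection, since exchanging a class
outside the selection for one inside never decreases the sum.\<close>

lemma sum_le_if_card_eq_and_dominated:
  fixes f :: "'a \<Rightarrow> 'b::ordered_comm_monoid_add"
  assumes "finite C" "finite D" "card D = card C"
    and dominated: "\<And>x y. x \<in> D \<Longrightarrow> x \<notin> C \<Longrightarrow> y \<in> C \<Longrightarrow> f x \<le> f y"
  shows "sum f D \<le> sum f C"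
proof -
  have "card (D - C) = card (C - D)"
    using assms(1-3) card_Diff_subset_Int[of D C] card_Diff_subset_Int[of C D]
    by (simp add: Int_commute)
  then obtain h where h: "bij_betw h (D - C) (C - D)"
    using finite_same_card_bij assms(1,2) by (metis finite_Diff)
  have "sum f (D - C) \<le> sum (f \<circ> h) (D - C)"
    using dominated h by (intro sum_mono) (auto dest: bij_betwE)
  also have "\<dots> = sum f (C - D)"
    using sum.reindex_bij_betw[OF h] by simp
  finally have "sum f (D - C) \<le> sum f (C - D)" .
  then have "sum f (D \<inter> C) + sum f (D - C) \<le> sum f (C \<inter> D) + sum f (C - D)"
    by (metis Int_commute add_left_mono)
  then show ?thesis
    using assms(1,2) by (metis sum.Int_Diff)
qed

lemma measure_pmf_UN_eq_sum_if_disjoint_on_support: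
  assumes "finite I"
    and disjoint: "\<And>i j. i \<in> I \<Longrightarrow> j \<in> I \<Longrightarrow> i \<noteq> j \<Longrightarrow> A i \<inter> A j \<inter> set_pmf M = {}"
  shows "measure_pmf.prob M (\<Union>i\<in>I. A i) = (\<Sum>i\<in>I. measure_pmf.prob M (A i))"
proof -
  have "measure_pmf.prob M (\<Union>i\<in>I. A i) = measure_pmf.prob M (\<Union>i\<in>I. A i \<inter> set_pmf M)"
    by (metis measure_Int_set_pmf UN_extend_simps(4))
  also have "\<dots> = (\<Sum>i\<in>I. measure_pmf.prob M (A i \<inter> set_pmf M))"
    using assms by (intro measure_pmf.finite_measure_finite_Union) (auto simp: disjoint_family_on_def)
  also have "\<dots> = (\<Sum>i\<in>I. measure_pmf.prob M (A i))"
    by (simp add: measure_Int_set_pmf)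
  finally show ?thesis .
qed

lemma equiv_class_self: "c \<in> equiv_class Out ntests e p c"
  by (simp add: equiv_class_def)

lemma equiv_class_eq_if_both_pass:
  assumes well_specified: "AE t in measure_pmf (test_marg p).
      \<exists>!C. C \<in> range (equiv_class Out ntests e p) \<and> (\<exists>c \<in> C. reward Out ntests e c t = 1)"
    and "t \<in> set_pmf (test_marg p)"
    and "reward Out ntests e c t = 1" "reward Out ntests e c' t = 1"
  shows "equiv_class Out ntests e p c = equiv_class Out ntests e p c'"
proof -
  let ?passing = "\<lambda>C. C \<in> range (equiv_class Out ntests e p) \<and> (\<exists>x \<in> C. reward Out ntests e x t = 1)"
  have "\<exists>!C. ?passing C"
    using assms(1,2) by (simp add: AE_measure_pmf_iff)
  moreover have "?passing (equiv_class Out ntests e p c)"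
    by (intro conjI rangeI bexI[of _ c] assms(3) equiv_class_self)
  moreover have "?passing (equiv_class Out ntests e p c')"
    by (intro conjI rangeI bexI[of _ c'] assms(4) equiv_class_self)
  ultimately show ?thesis
    by (metis Uniq_D ex1_iff_ex_Uniq)
qed

lemma pass_at_eq_sum_class_measure:
  assumes calibration: "\<forall>c. class_prob Out ntests e p c =
      measure_pmf.prob (test_marg p) {t. reward Out ntests e c t = 1}"
    and well_specified: "AE t in measure_pmf (test_marg p).
      \<exists>!C. C \<in> range (equiv_class Out ntests e p) \<and> (\<exists>c \<in> C. reward Out ntests e c t = 1)"
    and distinct_classes: "distinct (map (equiv_class Out ntests e p) ds)"
  shows "pass_at Out ntests e p ds =
    (\<Sum>C \<in> equiv_class Out ntests e p ` set ds. measure_pmf.prob (code_marg p) C)"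
proof -
  let ?cls = "equiv_class Out ntests e p"
  let ?passed = "\<lambda>c. {t. reward Out ntests e c t = 1}"
  have "pass_at Out ntests e p ds = measure_pmf.prob (test_marg p) (\<Union>i<length ds. ?passed (ds ! i))"
    unfolding pass_at_def by (intro arg_cong[where f = "measure_pmf.prob _"]) auto
  also have "\<dots> = (\<Sum>i<length ds. measure_pmf.prob (test_marg p) (?passed (ds ! i)))"
  proof (rule measure_pmf_UN_eq_sum_if_disjoint_on_support)
    fix i j assume "i \<in> {..<length ds}" "j \<in> {..<length ds}" "i \<noteq> j"
    then have "?cls (ds ! i) \<noteq> ?cls (ds ! j)"
      using distinct_classes by (auto simp: distinct_conv_nth)
    then show "?passed (ds ! i) \<inter> ?passed (ds ! j) \<inter> set_pmf (test_marg p) = {}"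
      using equiv_class_eq_if_both_pass[OF well_specified] by blast
  qed simp
  also have "\<dots> = (\<Sum>i<length ds. measure_pmf.prob (code_marg p) (?cls (ds ! i)))"
    using calibration by (simp add: class_prob_def)
  also have "\<dots> = sum_list (map (measure_pmf.prob (code_marg p)) (map ?cls ds))"
    by (simp add: sum_list_sum_nth atLeast0LessThan)
  also have "\<dots> = (\<Sum>C \<in> ?cls ` set ds. measure_pmf.prob (code_marg p) C)"
    using sum_list_distinct_conv_sum_set[OF distinct_classes] by simp
  finally show ?thesis .
qed

theorem proposition4p13:
  fixes Out :: "'e \<Rightarrow> ('v::finite) list \<Rightarrow> 'v list \<Rightarrow> nat \<Rightarrow> bool"
    and ntests :: "'v list \<Rightarrow> nat"
    and e :: 'e
    and p :: "('v list \<times> 'v list) pmf"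
    and k :: nat
    and cs :: "'v list list"
  assumes nonempty_suites: "\<forall>t. ntests t \<ge> 1"
    and calibration: "\<forall>c. class_prob Out ntests e p c =
          measure_pmf.prob (test_marg p) {t. reward Out ntests e c t = 1}"
    and well_specified: "AE t in measure_pmf (test_marg p).
          \<exists>!C. C \<in> range (equiv_class Out ntests e p) \<and> (\<exists>c \<in> C. reward Out ntests e c t = 1)"
    and cs_len: "length cs = k"
    and cs_distinct: "distinct (map (equiv_class Out ntests e p) cs)"
    and cs_greedy: "\<forall>c. equiv_class Out ntests e p c \<notin> equiv_class Out ntests e p ` set cs \<longrightarrow>
          (\<forall>i < k. class_prob Out ntests e p c \<le> class_prob Out ntests e p (cs ! i))"
  shows "\<forall>ds. length ds = k \<and> distinct (map (equiv_class Out ntests e p) ds) \<longrightarrow>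
           pass_at Out ntests e p ds \<le> pass_at Out ntests e p cs"
proof (intro allI impI)
  let ?cls = "equiv_class Out ntests e p"
  let ?P = "measure_pmf.prob (code_marg p)"
  fix ds assume "length ds = k \<and> distinct (map ?cls ds)"
  then have ds_len: "length ds = k" and ds_distinct: "distinct (map ?cls ds)" by auto
  have "pass_at Out ntests e p ds = sum ?P (?cls ` set ds)"
    by (rule pass_at_eq_sum_class_measure[OF calibration well_specified ds_distinct])
  also have "\<dots> \<le> sum ?P (?cls ` set cs)"
  proof (rule sum_le_if_card_eq_and_dominated)
    show "card (?cls ` set ds) = card (?cls ` set cs)"
      using ds_len ds_distinct cs_len cs_distinct by (metis distinct_card length_map set_map)
    show "?P X \<le> ?P Y" if "X \<in> ?cls ` set ds" "X \<notin> ?cls ` set cs" "Y \<in> ?cls ` set cs" for X Y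
      using that cs_greedy cs_len by (auto simp: class_prob_def in_set_conv_nth)
  qed simp_all
  also have "\<dots> = pass_at Out ntests e p cs"
    by (rule pass_at_eq_sum_class_measure[OF calibration well_specified cs_distinct, symmetric])
  finally show "pass_at Out ntests e p ds \<le> pass_at Out ntests e p cs" .
qed

end
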